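(* For every prime power $q$, the class $\mathcal{M}_q$ of $GF(q)$-chordal matroids is closed under induced restrictions: if $M\in\mathcal{M}_q$ and $F$ is a flat of $M$, then $M|F\in\mathcal{M}_q$.
   Context: All matroids are simple. For matroids $M_1,M_2$ whose ground sets meet in a set $T$ that is a modular flat of $M_1$ with $M_1|T=M_2|T=N$, the generalized parallel connection $P_N(M_1,M_2)$ is the matroid on $E(M_1)\cup E(M_2)$ whose flats are the sets $X$ with $X\cap E(M_i)$ a flat of $M_i$ for $i=1,2$ (if $T=\emptyset$ this is $M_1\oplus M_2$). $\mathcal{M}_q$ is the class of matroids that can be built from projective geometries over $GF(q)$ by a sequence of generalized parallel connections across projective geometries over $GF(q)$; its members are called $GF(q)$-chordal. An induced restriction of $M$ is a restriction of $M$ to a flat. *)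

theory Defs
  imports Main
begin

type_synonym 'a matroid = "'a set \<times> ('a set \<Rightarrow> bool)"

definition gnd :: "'a matroid \<Rightarrow> 'a set" where "gnd M = fst M"
definition indep :: "'a matroid \<Rightarrow> 'a set \<Rightarrow> bool" where "indep M = snd M"

definition matroid :: "'a matroid \<Rightarrow> bool" where
  "matroid M \<longleftrightarrow> finite (gnd M) \<and> indep M {}
     \<and> (\<forall>X. indep M X \<longrightarrow> X \<subseteq> gnd M)
     \<and> (\<forall>X Y. indep M X \<and> Y \<subseteq> X \<longrightarrow> indep M Y)
     \<and> (\<forall>X Y. indep M X \<and> indep M Y \<and> card X < card Y
          \<longrightarrow> (\<exists>e \<in> Y - X. indep M (insert e X)))"

definition simple_matroid :: "'a matroid \<Rightarrow> bool" where
  "simple_matroid M \<longleftrightarrow> matroid M \<and> (\<forall>X \<subseteq> gnd M. card X \<le> 2 \<longrightarrow> indep M X)"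

definition rk :: "'a matroid \<Rightarrow> 'a set \<Rightarrow> nat" where
  "rk M X = Max (card ` {Y. Y \<subseteq> X \<and> indep M Y})"

definition flat :: "'a matroid \<Rightarrow> 'a set \<Rightarrow> bool" where
  "flat M X \<longleftrightarrow> X \<subseteq> gnd M \<and> (\<forall>e \<in> gnd M - X. rk M (insert e X) > rk M X)"

definition modular_flat :: "'a matroid \<Rightarrow> 'a set \<Rightarrow> bool" where
  "modular_flat M X \<longleftrightarrow> flat M X \<and>
     (\<forall>Y. flat M Y \<longrightarrow> rk M X + rk M Y = rk M (X \<inter> Y) + rk M (X \<union> Y))"

definition restr :: "'a matroid \<Rightarrow> 'a set \<Rightarrow> 'a matroid" where
  "restr M X = (X, \<lambda>Y. indep M Y \<and> Y \<subseteq> X)"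

definition iso :: "'a matroid \<Rightarrow> 'b matroid \<Rightarrow> bool" where
  "iso M M' \<longleftrightarrow> (\<exists>f. bij_betw f (gnd M) (gnd M') \<and>
      (\<forall>X \<subseteq> gnd M. indep M X \<longleftrightarrow> indep M' (f ` X)))"

text \<open>The projective geometry PG(n-1, F) over the finite field 'f: its points are the
one-dimensional subspaces of F^n (vectors are functions nat => 'f vanishing from n on),
each point represented as the set of nonzero multiples of a nonzero vector; a set of points
is independent iff (any choice of) representatives is linearly independent.\<close>
definition fvec :: "nat \<Rightarrow> (nat \<Rightarrow> 'f::field) set" where
  "fvec n = {v. \<forall>i\<ge>n. v i = 0}"

definition pg_points :: "nat \<Rightarrow> (nat \<Rightarrow> 'f::field) set set" where
  "pg_points n = {{(\<lambda>i. c * v i) | c. c \<noteq> 0} | v. v \<in> fvec n \<and> v \<noteq> (\<lambda>_. 0)}"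

definition pg_indep :: "nat \<Rightarrow> (nat \<Rightarrow> 'f::field) set set \<Rightarrow> bool" where
  "pg_indep n S \<longleftrightarrow> S \<subseteq> pg_points n \<and> finite S \<and>
     (\<forall>rep a. (\<forall>p\<in>S. rep p \<in> p) \<longrightarrow>
        (\<lambda>i. \<Sum>p\<in>S. a p * rep p i) = (\<lambda>_. 0) \<longrightarrow> (\<forall>p\<in>S. a p = 0))"

definition PG :: "nat \<Rightarrow> (nat \<Rightarrow> 'f::field) set matroid" where
  "PG n = (pg_points n, pg_indep n)"

definition is_PG :: "'f::{finite,field} itself \<Rightarrow> 'a matroid \<Rightarrow> bool" where
  "is_PG F M \<longleftrightarrow> (\<exists>n. iso M (PG n :: (nat \<Rightarrow> 'f) set matroid))"

text \<open>M is the generalized parallel connection P_N(M1,M2): the ground sets meet in a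
modular flat T of M1 with M1|T = M2|T = N, and M is the matroid on the union whose flats
are exactly the sets meeting each E(Mi) in a flat of Mi.\<close>
definition is_gpc :: "'a matroid \<Rightarrow> 'a matroid \<Rightarrow> 'a matroid \<Rightarrow> bool" where
  "is_gpc M1 M2 M \<longleftrightarrow> matroid M \<and> gnd M = gnd M1 \<union> gnd M2 \<and>
     (\<forall>X. flat M X \<longleftrightarrow> X \<subseteq> gnd M \<and> flat M1 (X \<inter> gnd M1) \<and> flat M2 (X \<inter> gnd M2))"

text \<open>The class M_q of GF(q)-chordal matroids, with the field GF(q) given as the type 'f.\<close>
inductive chordal :: "'f::{finite,field} itself \<Rightarrow> 'a matroid \<Rightarrow> bool" for F where
  base: "simple_matroid M \<Longrightarrow> is_PG F M \<Longrightarrow> chordal F M"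
| gpc: "chordal F M1 \<Longrightarrow> chordal F M2 \<Longrightarrow>
        modular_flat M1 (gnd M1 \<inter> gnd M2) \<Longrightarrow>
        restr M1 (gnd M1 \<inter> gnd M2) = restr M2 (gnd M1 \<inter> gnd M2) \<Longrightarrow>
        is_PG F (restr M1 (gnd M1 \<inter> gnd M2)) \<Longrightarrow>
        is_gpc M1 M2 M \<Longrightarrow> chordal F M"

end

theory Submission
  imports Defs
begin

text \<open>
  Induction along the construction of a \<open>GF(q)\<close>-chordal matroid.
  For a projective geometry, a flat \<open>Z\<close> of rank \<open>k\<close> has a basis with representative vectors
  \<open>b\<^sub>i\<close> (\<open>i < k\<close>); the injective linear map \<open>w \<mapsto> \<Sum> w\<^sub>i b\<^sub>i\<close> sends the points of \<open>PG(k-1, q)\<close>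
  exactly onto \<open>Z\<close> (because \<open>Z\<close> is closed) and preserves independence, so \<open>PG(n-1, q)|Z\<close> is again
  a projective geometry. For a generalized parallel connection of \<open>M\<^sub>1\<close> and \<open>M\<^sub>2\<close> across
  \<open>T = E(M\<^sub>1) \<inter> E(M\<^sub>2)\<close> and a flat \<open>X\<close>, the sets \<open>X \<inter> E(M\<^sub>i)\<close> are flats of \<open>M\<^sub>i\<close>; modularity of
  \<open>T\<close> passes to \<open>X \<inter> T\<close> in \<open>M\<^sub>1|(X \<inter> E(M\<^sub>1))\<close>, \<open>M\<^sub>1|(X \<inter> T)\<close> is an induced restriction of the
  projective geometry \<open>M\<^sub>1|T\<close>, and the flats of \<open>M|X\<close> are exactly the sets meeting both
  restrictions in flats, so \<open>M|X\<close> is their generalized parallel connection.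
\<close>

section \<open>Rank, flats and restrictions\<close>

lemma matroid_finite_gnd: "matroid M \<Longrightarrow> finite (gnd M)"
  by (simp add: matroid_def)

lemma matroid_indep_empty: "matroid M \<Longrightarrow> indep M {}"
  by (simp add: matroid_def)

lemma matroid_indep_subset_gnd: "matroid M \<Longrightarrow> indep M X \<Longrightarrow> X \<subseteq> gnd M"
  by (simp add: matroid_def)

lemma matroid_indep_subset: "matroid M \<Longrightarrow> indep M X \<Longrightarrow> Y \<subseteq> X \<Longrightarrow> indep M Y"
  unfolding matroid_def by blast

lemma matroid_augment:
  "matroid M \<Longrightarrow> indep M X \<Longrightarrow> indep M Y \<Longrightarrow> card X < card Y \<Longrightarrow> \<exists>e \<in> Y - X. indep M (insert e X)"
  by (simp add: matroid_def)

lemma matroid_indep_finite: "matroid M \<Longrightarrow> indep M X \<Longrightarrow> finite X"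
  by (metis finite_subset matroid_finite_gnd matroid_indep_subset_gnd)

lemma finite_indep_subsets: "matroid M \<Longrightarrow> finite {Y. Y \<subseteq> S \<and> indep M Y}"
  by (rule finite_subset[of _ "Pow (gnd M)"]) (auto simp: matroid_finite_gnd dest: matroid_indep_subset_gnd)

lemma rk_ge_card: "matroid M \<Longrightarrow> Y \<subseteq> S \<Longrightarrow> indep M Y \<Longrightarrow> card Y \<le> rk M S"
  unfolding rk_def by (rule Max_ge) (auto intro: finite_indep_subsets)

lemma rk_attained:
  assumes "matroid M"
  obtains Y where "Y \<subseteq> S" "indep M Y" "card Y = rk M S"
proof -
  have "{} \<in> {Y. Y \<subseteq> S \<and> indep M Y}" using matroid_indep_empty[OF assms] by simp
  then have "rk M S \<in> card ` {Y. Y \<subseteq> S \<and> indep M Y}"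
    unfolding rk_def using finite_indep_subsets[OF assms] by (intro Max_in) auto
  then show ?thesis using that by auto
qed

lemma rk_le: "matroid M \<Longrightarrow> (\<And>Y. Y \<subseteq> S \<Longrightarrow> indep M Y \<Longrightarrow> card Y \<le> k) \<Longrightarrow> rk M S \<le> k"
  by (metis rk_attained)

lemma rk_indep: "matroid M \<Longrightarrow> indep M Y \<Longrightarrow> rk M Y = card Y"
  by (intro antisym rk_le rk_ge_card card_mono) (auto intro: matroid_indep_finite)

lemma indep_extend_to_rk:
  assumes m: "matroid M" and "I \<subseteq> S" "indep M I"
  obtains J where "I \<subseteq> J" "J \<subseteq> S" "indep M J" "card J = rk M S"
proof -
  have "\<exists>J. I \<subseteq> J \<and> J \<subseteq> S \<and> indep M J \<and> card J = rk M S"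
    using assms(2,3)
  proof (induction "rk M S - card I" arbitrary: I)
    case 0
    then have "card I = rk M S" using rk_ge_card[OF m, of I S] by simp
    with 0 show ?case by blast
  next
    case (Suc d)
    obtain K where K: "K \<subseteq> S" "indep M K" "card K = rk M S"
      using rk_attained[OF m] by blast
    have "card I < card K" using Suc.hyps(2) K(3) by simp
    then obtain e where e: "e \<in> K - I" "indep M (insert e I)"
      using matroid_augment[OF m \<open>indep M I\<close> K(2)] by blast
    have "d = rk M S - card (insert e I)"
      using Suc.hyps(2) e(1) matroid_indep_finite[OF m \<open>indep M I\<close>] by simp
    moreover have "insert e I \<subseteq> S" using Suc.prems(1) e(1) K(1) by blast
    ultimately have "\<exists>J. insert e I \<subseteq> J \<and> J \<subseteq> S \<and> indep M J \<and> card J = rk M S"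
      using e(2) by (rule Suc.hyps(1))
    then show ?case by blast
  qed
  then show ?thesis using that by blast
qed

lemma rk_submodular: "matroid M \<Longrightarrow> rk M (A \<union> B) + rk M (A \<inter> B) \<le> rk M A + rk M B"
proof -
  assume m: "matroid M"
  obtain I where I: "I \<subseteq> A \<inter> B" "indep M I" "card I = rk M (A \<inter> B)"
    using rk_attained[OF m] by blast
  obtain JA where JA: "I \<subseteq> JA" "JA \<subseteq> A" "indep M JA" "card JA = rk M A"
    using indep_extend_to_rk[OF m _ I(2), of A] I(1) by blast
  obtain J where J: "JA \<subseteq> J" "J \<subseteq> A \<union> B" "indep M J" "card J = rk M (A \<union> B)"
    using indep_extend_to_rk[OF m _ JA(3), of "A \<union> B"] JA(2) by blast
  have fin: "finite J" using matroid_indep_finite[OF m J(3)] .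
  have indep_J: "indep M (J \<inter> C)" for C using matroid_indep_subset[OF m J(3)] by blast
  have "card (J \<inter> A) \<le> rk M A" "card (J \<inter> B) \<le> rk M B" "card (J \<inter> (A \<inter> B)) \<le> rk M (A \<inter> B)"
    by (intro rk_ge_card[OF m _ indep_J]; blast)+
  moreover have "card JA \<le> card (J \<inter> A)" "card I \<le> card (J \<inter> (A \<inter> B))"
    using I(1) JA(1,2) J(1) fin by (auto intro!: card_mono)
  moreover have "card (J \<inter> A) + card (J \<inter> B) = card J + card (J \<inter> (A \<inter> B))"
  proof -
    have "J \<inter> A \<union> J \<inter> B = J" "J \<inter> A \<inter> (J \<inter> B) = J \<inter> (A \<inter> B)" using J(2) by auto
    then show ?thesis using card_Un_Int[of "J \<inter> A" "J \<inter> B"] fin by simp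
  qed
  ultimately show ?thesis using I(3) JA(4) J(4) by linarith
qed

lemma rk_insert_le_mono:
  assumes m: "matroid M" and "Z \<subseteq> X" and "rk M (insert e Z) \<le> rk M Z"
  shows "rk M (insert e X) \<le> rk M X"
proof (cases "e \<in> X")
  case False
  then have "insert e Z \<union> X = insert e X" "insert e Z \<inter> X = Z" using \<open>Z \<subseteq> X\<close> by auto
  then show ?thesis using rk_submodular[OF m, of "insert e Z" X] assms(3) by simp
qed (simp add: insert_absorb)

lemma flat_subset_gnd: "flat M X \<Longrightarrow> X \<subseteq> gnd M"
  by (simp add: flat_def)

lemma flat_rk_insert: "flat M X \<Longrightarrow> e \<in> gnd M - X \<Longrightarrow> rk M X < rk M (insert e X)"
  by (simp add: flat_def)

lemma flat_Int:
  assumes m: "matroid M" and A: "flat M A" and B: "flat M B"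
  shows "flat M (A \<inter> B)"
  unfolding flat_def
proof (intro conjI ballI)
  show "A \<inter> B \<subseteq> gnd M" using flat_subset_gnd[OF A] by blast
  fix e assume e: "e \<in> gnd M - A \<inter> B"
  show "rk M (A \<inter> B) < rk M (insert e (A \<inter> B))"
  proof (rule ccontr)
    assume "\<not> ?thesis"
    then have spanned: "rk M (insert e (A \<inter> B)) \<le> rk M (A \<inter> B)" by simp
    consider "e \<in> gnd M - A" | "e \<in> gnd M - B" using e by blast
    then show False
      by cases (use flat_rk_insert[OF A] flat_rk_insert[OF B]
          rk_insert_le_mono[OF m _ spanned, of A] rk_insert_le_mono[OF m _ spanned, of B] in force)+
  qed
qed

definition basis_of :: "'a matroid \<Rightarrow> 'a set \<Rightarrow> 'a set \<Rightarrow> bool" where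
  "basis_of M Z B \<longleftrightarrow> B \<subseteq> Z \<and> indep M B \<and> card B = rk M Z"

lemma basis_of_exists: "matroid M \<Longrightarrow> \<exists>B. basis_of M Z B"
  unfolding basis_of_def by (metis rk_attained)

lemma basis_insert_dependent:
  assumes m: "matroid M" and B: "basis_of M Z B" and q: "q \<in> Z - B"
  shows "\<not> indep M (insert q B)"
proof
  assume "indep M (insert q B)"
  then have "card (insert q B) \<le> rk M Z" using B q by (intro rk_ge_card[OF m]) (auto simp: basis_of_def)
  then show False
    using B q matroid_indep_finite[OF m] by (auto simp: basis_of_def)
qed

lemma rk_insert_dependent:
  assumes m: "matroid M" and B: "indep M B" and dep: "\<not> indep M (insert p B)"
  shows "rk M (insert p B) = card B"
proof -
  have "rk M (insert p B) \<le> card B"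
  proof (rule rk_le[OF m])
    fix Y assume Y: "Y \<subseteq> insert p B" "indep M Y"
    have fin: "finite B" using matroid_indep_finite[OF m B] .
    have "p \<notin> B" using B dep by (auto simp: insert_absorb)
    have "Y \<subset> insert p B" using Y dep by blast
    then have "card Y < card (insert p B)" using fin by (intro psubset_card_mono) auto
    then show "card Y \<le> card B" using fin \<open>p \<notin> B\<close> by simp
  qed
  moreover have "card B \<le> rk M (insert p B)" using rk_ge_card[OF m _ B] by blast
  ultimately show ?thesis by simp
qed

lemma flat_basis_insert_indep:
  assumes m: "matroid M" and Z: "flat M Z" and B: "basis_of M Z B" and p: "p \<in> gnd M - Z"
  shows "indep M (insert p B)"
proof (rule ccontr)
  assume dep: "\<not> indep M (insert p B)"
  have BZ: "B \<subseteq> Z" and indB: "indep M B" and rkZ: "rk M Z = card B"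
    using B by (auto simp: basis_of_def)
  have "insert p B \<union> Z = insert p Z" "insert p B \<inter> Z = B" using BZ p by auto
  then have "rk M (insert p Z) + rk M B \<le> rk M (insert p B) + rk M Z"
    using rk_submodular[OF m, of "insert p B" Z] by (simp add: add.commute)
  then have "rk M (insert p Z) \<le> rk M Z"
    using rk_insert_dependent[OF m indB dep] rk_indep[OF m indB] by simp
  then show False using flat_rk_insert[OF Z p] by simp
qed

lemma gnd_restr [simp]: "gnd (restr M X) = X"
  by (simp add: restr_def gnd_def)

lemma indep_restr [simp]: "indep (restr M X) Y \<longleftrightarrow> indep M Y \<and> Y \<subseteq> X"
  by (simp add: restr_def indep_def)

lemma restr_restr: "B \<subseteq> A \<Longrightarrow> restr (restr M A) B = restr M B"
  unfolding restr_def indep_def by auto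

lemma rk_restr: "Y \<subseteq> X \<Longrightarrow> rk (restr M X) Y = rk M Y"
  unfolding rk_def by (rule arg_cong[where f = "\<lambda>S. Max (card ` S)"]) auto

lemma matroid_restr:
  assumes m: "matroid M" and X: "X \<subseteq> gnd M"
  shows "matroid (restr M X)"
proof -
  have "\<exists>e\<in>B - A. indep M (insert e A) \<and> insert e A \<subseteq> X"
    if "indep M A" "indep M B" "B \<subseteq> X" "A \<subseteq> X" "card A < card B" for A B
    using matroid_augment[OF m that(1,2,5)] that(3,4) by blast
  then show ?thesis
    using finite_subset[OF X matroid_finite_gnd[OF m]] matroid_indep_empty[OF m] matroid_indep_subset[OF m]
    unfolding matroid_def gnd_restr indep_restr by blast
qed

lemma simple_matroid_restr: "simple_matroid M \<Longrightarrow> X \<subseteq> gnd M \<Longrightarrow> simple_matroid (restr M X)"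
  unfolding simple_matroid_def by (auto intro: matroid_restr)

lemma flat_restr_iff:
  assumes m: "matroid M" and X: "flat M X"
  shows "flat (restr M X) Z \<longleftrightarrow> Z \<subseteq> X \<and> flat M Z"
proof
  assume Z: "flat (restr M X) Z"
  then have ZX: "Z \<subseteq> X" by (simp add: flat_def)
  have "rk M Z < rk M (insert e Z)" if e: "e \<in> gnd M - Z" for e
  proof (cases "e \<in> X")
    case True
    then show ?thesis using Z e ZX by (auto simp: flat_def rk_restr)
  next
    case False
    then have "rk M X < rk M (insert e X)" using flat_rk_insert[OF X] e by blast
    then show ?thesis using rk_insert_le_mono[OF m ZX, of e] by linarith
  qed
  then show "Z \<subseteq> X \<and> flat M Z" using ZX flat_subset_gnd[OF X] by (auto simp: flat_def)
next
  assume "Z \<subseteq> X \<and> flat M Z"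
  then show "flat (restr M X) Z" using flat_subset_gnd[OF X] by (auto simp: flat_def rk_restr)
qed

lemma modular_flat_restr:
  assumes m: "matroid M" and T: "modular_flat M T" and F: "flat M F"
  shows "modular_flat (restr M F) (T \<inter> F)"
  unfolding modular_flat_def
proof (intro conjI allI impI)
  have "flat M T" using T by (simp add: modular_flat_def)
  then show "flat (restr M F) (T \<inter> F)" using flat_restr_iff[OF m F] flat_Int[OF m _ F] by blast
  fix Y assume "flat (restr M F) Y"
  then have YF: "Y \<subseteq> F" and Y: "flat M Y" using flat_restr_iff[OF m F] by auto
  have mod_Y: "rk M T + rk M Y = rk M (T \<inter> Y) + rk M (T \<union> Y)"
    and mod_F: "rk M T + rk M F = rk M (T \<inter> F) + rk M (T \<union> F)"
    using T Y F by (simp_all add: modular_flat_def)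
  \<comment> \<open>the modular equation for \<open>T \<inter> F\<close> and \<open>Y\<close> is squeezed between two submodular inequalities\<close>
  have "(T \<union> Y) \<union> F = T \<union> F" "(T \<union> Y) \<inter> F = (T \<inter> F) \<union> Y" using YF by auto
  then have sub1: "rk M (T \<union> F) + rk M ((T \<inter> F) \<union> Y) \<le> rk M (T \<union> Y) + rk M F"
    using rk_submodular[OF m, of "T \<union> Y" F] by simp
  have "T \<union> ((T \<inter> F) \<union> Y) = T \<union> Y" "T \<inter> ((T \<inter> F) \<union> Y) = T \<inter> F" using YF by auto
  then have sub2: "rk M (T \<union> Y) + rk M (T \<inter> F) \<le> rk M T + rk M ((T \<inter> F) \<union> Y)"
    using rk_submodular[OF m, of T "(T \<inter> F) \<union> Y"] by simp
  have "T \<inter> F \<inter> Y = T \<inter> Y" "T \<inter> Y \<subseteq> F" using YF by auto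
  then show "rk (restr M F) (T \<inter> F) + rk (restr M F) Y =
      rk (restr M F) (T \<inter> F \<inter> Y) + rk (restr M F) (T \<inter> F \<union> Y)"
    using YF mod_Y mod_F sub1 sub2 by (simp add: rk_restr)
qed

section \<open>Isomorphisms\<close>

definition iso_map :: "('a \<Rightarrow> 'b) \<Rightarrow> 'a matroid \<Rightarrow> 'b matroid \<Rightarrow> bool" where
  "iso_map f M N \<longleftrightarrow> bij_betw f (gnd M) (gnd N) \<and> (\<forall>X \<subseteq> gnd M. indep M X \<longleftrightarrow> indep N (f ` X))"

lemma iso_iff_iso_map: "iso M N \<longleftrightarrow> (\<exists>f. iso_map f M N)"
  by (simp add: iso_def iso_map_def)

lemma iso_map_bij: "iso_map f M N \<Longrightarrow> bij_betw f (gnd M) (gnd N)"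
  by (simp add: iso_map_def)

lemma iso_map_indep: "iso_map f M N \<Longrightarrow> X \<subseteq> gnd M \<Longrightarrow> indep N (f ` X) \<longleftrightarrow> indep M X"
  by (simp add: iso_map_def)

lemma iso_map_preimage:
  assumes f: "iso_map f M N" and Z: "Z \<subseteq> gnd N"
  obtains Y where "Y \<subseteq> gnd M" "Z = f ` Y" "indep N Z \<longleftrightarrow> indep M Y"
proof
  let ?Y = "inv_into (gnd M) f ` Z"
  have bij: "bij_betw f (gnd M) (gnd N)" using iso_map_bij[OF f] .
  then show "?Y \<subseteq> gnd M" using Z by (auto simp: bij_betw_def inv_into_into)
  show "Z = f ` ?Y" using bij Z by (simp add: bij_betw_def image_inv_into_cancel)
  with \<open>?Y \<subseteq> gnd M\<close> show "indep N Z \<longleftrightarrow> indep M ?Y" using iso_map_indep[OF f] by metis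
qed

lemma iso_map_inv: "iso_map f M N \<Longrightarrow> iso_map (inv_into (gnd M) f) N M"
  unfolding iso_map_def
  by (metis bij_betw_def bij_betw_imp_surj_on bij_betw_inv_into image_inv_into_cancel
      inv_into_image_cancel subset_image_iff)

lemma iso_sym: "iso M N \<Longrightarrow> iso N M"
  using iso_map_inv iso_iff_iso_map by metis

lemma iso_map_comp:
  assumes f: "iso_map f M N" and g: "iso_map g N P"
  shows "iso_map (g \<circ> f) M P"
proof -
  have "indep P ((g \<circ> f) ` X) \<longleftrightarrow> indep M X" if X: "X \<subseteq> gnd M" for X
  proof -
    have "f ` X \<subseteq> gnd N" using X bij_betw_imp_surj_on[OF iso_map_bij[OF f]] by blast
    then show ?thesis using iso_map_indep[OF f X] iso_map_indep[OF g] by (metis image_comp)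
  qed
  then show ?thesis
    using bij_betw_trans[OF iso_map_bij[OF f] iso_map_bij[OF g]] by (simp add: iso_map_def)
qed

lemma iso_trans: "iso M N \<Longrightarrow> iso N P \<Longrightarrow> iso M P"
  using iso_map_comp iso_iff_iso_map by metis

lemma iso_map_restr:
  assumes f: "iso_map f M N" and X: "X \<subseteq> gnd M"
  shows "iso_map f (restr M X) (restr N (f ` X))"
proof -
  have "inj_on f X" using iso_map_bij[OF f] X by (auto simp: bij_betw_def intro: inj_on_subset)
  then show ?thesis
    using iso_map_indep[OF f] X by (auto simp: iso_map_def inj_on_imp_bij_betw)
qed

lemma matroid_iso_map:
  assumes m: "matroid M" and f: "iso_map f M N" and sub: "\<And>Y. indep N Y \<Longrightarrow> Y \<subseteq> gnd N"
  shows "matroid N"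
proof -
  have bij: "bij_betw f (gnd M) (gnd N)" using iso_map_bij[OF f] .
  then have inj: "inj_on f (gnd M)" by (simp add: bij_betw_def)
  have card_f: "card (f ` Y) = card Y" if "Y \<subseteq> gnd M" for Y
    using card_image[OF inj_on_subset[OF inj that]] .
  have down: "indep N Y" if X: "indep N X" and YX: "Y \<subseteq> X" for X Y
  proof -
    obtain X' where X': "X' \<subseteq> gnd M" "X = f ` X'" "indep M X'"
      using iso_map_preimage[OF f sub[OF X]] X by blast
    obtain Y' where Y': "Y' \<subseteq> gnd M" "Y = f ` Y'" "indep N Y \<longleftrightarrow> indep M Y'"
      using iso_map_preimage[OF f] YX sub[OF X] by (metis subset_trans)
    have "Y' \<subseteq> X'" using X' Y' YX inj_on_image_mem_iff[OF inj] by blast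
    then show ?thesis using Y'(3) matroid_indep_subset[OF m X'(3)] by blast
  qed
  have aug: "\<exists>e \<in> Y - X. indep N (insert e X)"
    if X: "indep N X" and Y: "indep N Y" and lt: "card X < card Y" for X Y
  proof -
    obtain X' where X': "X' \<subseteq> gnd M" "X = f ` X'" "indep M X'"
      using iso_map_preimage[OF f sub[OF X]] X by blast
    obtain Y' where Y': "Y' \<subseteq> gnd M" "Y = f ` Y'" "indep M Y'"
      using iso_map_preimage[OF f sub[OF Y]] Y by blast
    obtain e where e: "e \<in> Y' - X'" "indep M (insert e X')"
      using matroid_augment[OF m X'(3) Y'(3)] lt X' Y' card_f by auto
    have "f e \<in> Y - X" using e X' Y' inj_on_image_mem_iff[OF inj] by blast
    moreover have "indep N (insert (f e) X)"
      using e X' Y' iso_map_indep[OF f, of "insert e X'"] by auto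
    ultimately show ?thesis by blast
  qed
  show ?thesis
    unfolding matroid_def
    using bij_betw_finite[OF bij] matroid_finite_gnd[OF m] iso_map_indep[OF f, of "{}"]
      matroid_indep_empty[OF m] sub down aug by auto
qed

lemma rk_le_rk_iso_map_image:
  assumes m: "matroid M" and n: "matroid N" and f: "iso_map f M N" and X: "X \<subseteq> gnd M"
  shows "rk M X \<le> rk N (f ` X)"
proof -
  obtain Y where Y: "Y \<subseteq> X" "indep M Y" "card Y = rk M X" using rk_attained[OF m] by blast
  have "inj_on f Y" using iso_map_bij[OF f] X Y(1) by (auto simp: bij_betw_def intro: inj_on_subset)
  then have "card (f ` Y) = rk M X" using Y(3) by (simp add: card_image)
  moreover have "indep N (f ` Y)" using iso_map_indep[OF f] X Y by blast
  ultimately show ?thesis using rk_ge_card[OF n, of "f ` Y" "f ` X"] Y(1) by auto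
qed

lemma iso_map_rk:
  assumes m: "matroid M" and n: "matroid N" and f: "iso_map f M N" and X: "X \<subseteq> gnd M"
  shows "rk N (f ` X) = rk M X"
proof -
  have bij: "bij_betw f (gnd M) (gnd N)" using iso_map_bij[OF f] .
  have "f ` X \<subseteq> gnd N" using X bij by (auto simp: bij_betw_def)
  moreover have "inv_into (gnd M) f ` f ` X = X" using bij X by (simp add: bij_betw_def)
  ultimately have "rk N (f ` X) \<le> rk M X"
    using rk_le_rk_iso_map_image[OF n m iso_map_inv[OF f]] by metis
  then show ?thesis using rk_le_rk_iso_map_image[OF m n f X] by simp
qed

lemma iso_map_flat:
  assumes m: "matroid M" and n: "matroid N" and f: "iso_map f M N" and X: "flat M X"
  shows "flat N (f ` X)"
  unfolding flat_def
proof (intro conjI ballI)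
  have bij: "bij_betw f (gnd M) (gnd N)" using iso_map_bij[OF f] .
  have XM: "X \<subseteq> gnd M" using flat_subset_gnd[OF X] .
  then show "f ` X \<subseteq> gnd N" using bij by (auto simp: bij_betw_def)
  fix e' assume e': "e' \<in> gnd N - f ` X"
  then have "e' \<in> f ` gnd M" using bij by (simp add: bij_betw_def)
  then obtain e where e: "e \<in> gnd M - X" "e' = f e" using e' by blast
  then have "insert e X \<subseteq> gnd M" using XM by blast
  then show "rk N (f ` X) < rk N (insert e' (f ` X))"
    using flat_rk_insert[OF X e(1)] iso_map_rk[OF m n f] XM e(2) by (metis image_insert)
qed

section \<open>Projective geometries\<close>

lemma gnd_PG [simp]: "gnd (PG n) = pg_points n"
  by (simp add: PG_def gnd_def)

lemma indep_PG [simp]: "indep (PG n) = pg_indep n"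
  by (simp add: PG_def indep_def)

definition pg_point :: "(nat \<Rightarrow> 'f::field) \<Rightarrow> (nat \<Rightarrow> 'f) set" where
  "pg_point v = {(\<lambda>i. c * v i) | c. c \<noteq> 0}"

lemma pg_points_eq: "pg_points n = {pg_point v | v. v \<in> fvec n \<and> v \<noteq> (\<lambda>_. 0)}"
  by (simp add: pg_points_def pg_point_def)

lemma pg_point_in_pg_points: "v \<in> fvec n \<Longrightarrow> v \<noteq> (\<lambda>_. 0) \<Longrightarrow> pg_point v \<in> pg_points n"
  unfolding pg_points_eq by blast

lemma self_in_pg_point: "v \<in> pg_point v"
  unfolding pg_point_def by (rule CollectI, rule exI[of _ 1]) simp

lemma mem_pg_point_iff: "u \<in> pg_point v \<longleftrightarrow> (\<exists>c. c \<noteq> 0 \<and> u = (\<lambda>i. c * v i))"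
  by (auto simp: pg_point_def)

lemma pg_point_eq_of_mem:
  assumes "u \<in> pg_point (v :: nat \<Rightarrow> 'f::field)"
  shows "pg_point u = pg_point v"
proof -
  obtain c where c: "c \<noteq> 0" "u = (\<lambda>i. c * v i)" using assms by (auto simp: mem_pg_point_iff)
  have "(\<lambda>i. d * u i) = (\<lambda>i. (d * c) * v i)" "(\<lambda>i. d * v i) = (\<lambda>i. (d / c) * u i)" for d
    using c by (simp_all add: mult.assoc)
  moreover have "d * c \<noteq> 0" "d / c \<noteq> 0" if "d \<noteq> 0" for d
    using c that by simp_all
  ultimately show ?thesis unfolding mem_pg_point_iff set_eq_iff by metis
qed

lemma pg_points_memD:
  assumes "P \<in> pg_points n" and "u \<in> P"
  shows "u \<in> fvec n" "u \<noteq> (\<lambda>_. 0)" "P = pg_point u"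
proof -
  obtain v where v: "v \<in> fvec n" "v \<noteq> (\<lambda>_. 0)" "P = pg_point v"
    using assms(1) unfolding pg_points_eq by blast
  then obtain c where c: "c \<noteq> 0" "u = (\<lambda>i. c * v i)" using assms(2) unfolding pg_point_def by blast
  show "u \<in> fvec n" using c v(1) by (simp add: fvec_def)
  show "u \<noteq> (\<lambda>_. 0)" using c v(2) by (auto simp: fun_eq_iff)
  show "P = pg_point u" using pg_point_eq_of_mem assms(2) v(3) by metis
qed

lemma some_elem_pg_point:
  assumes "P \<in> pg_points n"
  shows "some_elem P \<in> P"
proof (rule some_elem_nonempty)
  obtain v where "P = pg_point v" using assms unfolding pg_points_eq by blast
  then show "P \<noteq> {}" using self_in_pg_point by blast
qed

definition lin_indep_on :: "'p set \<Rightarrow> ('p \<Rightarrow> nat \<Rightarrow> 'f::field) \<Rightarrow> bool" where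
  "lin_indep_on S r \<longleftrightarrow> (\<forall>a. (\<lambda>i. \<Sum>p\<in>S. a p * r p i) = (\<lambda>_. 0) \<longrightarrow> (\<forall>p\<in>S. a p = 0))"

lemma lin_indep_onD:
  "lin_indep_on S r \<Longrightarrow> (\<lambda>i. \<Sum>p\<in>S. a p * r p i) = (\<lambda>_. 0) \<Longrightarrow> p \<in> S \<Longrightarrow> a p = 0"
  unfolding lin_indep_on_def by blast

lemma lin_indep_on_rescale:
  assumes r: "lin_indep_on S r" and c: "\<And>p. p \<in> S \<Longrightarrow> c p \<noteq> 0 \<and> r' p = (\<lambda>i. c p * r p i)"
  shows "lin_indep_on S r'"
  unfolding lin_indep_on_def
proof (intro allI impI ballI)
  fix a p assume rel: "(\<lambda>i. \<Sum>q\<in>S. a q * r' q i) = (\<lambda>_. 0)" and p: "p \<in> S"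
  have "(\<lambda>i. \<Sum>q\<in>S. (a q * c q) * r q i) = (\<lambda>i. \<Sum>q\<in>S. a q * r' q i)"
    using c by (intro ext sum.cong) (simp_all add: mult.assoc)
  then have "a p * c p = 0" using lin_indep_onD[OF r _ p, of "\<lambda>q. a q * c q"] rel by simp
  then show "a p = 0" using c[OF p] by simp
qed

lemma lin_indep_on_image:
  assumes h: "inj_on h S" and r: "\<And>p. p \<in> S \<Longrightarrow> r (h p) = r' p"
  shows "lin_indep_on (h ` S) r \<longleftrightarrow> lin_indep_on S r'"
proof -
  have sum_image: "(\<Sum>q\<in>h ` S. a q * r q i) = (\<Sum>p\<in>S. a (h p) * r' p i)" for a i
    using h r by (simp add: sum.reindex)
  show ?thesis
  proof
    assume ind: "lin_indep_on (h ` S) r"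
    show "lin_indep_on S r'"
      unfolding lin_indep_on_def
    proof (intro allI impI ballI)
      fix a p assume rel: "(\<lambda>i. \<Sum>q\<in>S. a q * r' q i) = (\<lambda>_. 0)" and p: "p \<in> S"
      let ?b = "\<lambda>q. a (inv_into S h q)"
      have "?b (h p') = a p'" if "p' \<in> S" for p' using h that by simp
      then have "(\<lambda>i. \<Sum>q\<in>h ` S. ?b q * r q i) = (\<lambda>_. 0)"
        using rel by (simp add: sum_image cong: sum.cong)
      then show "a p = 0" using lin_indep_onD[OF ind] p h by fastforce
    qed
  next
    assume ind: "lin_indep_on S r'"
    show "lin_indep_on (h ` S) r"
      unfolding lin_indep_on_def sum_image
    proof (intro allI impI ballI)
      fix a q assume rel: "(\<lambda>i. \<Sum>p\<in>S. a (h p) * r' p i) = (\<lambda>_. 0)" and "q \<in> h ` S"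
      then obtain p where "p \<in> S" "q = h p" by blast
      then show "a q = 0" using lin_indep_onD[OF ind rel] by simp
    qed
  qed
qed

lemma pg_indep_iff_lin_indep_on:
  assumes S: "S \<subseteq> pg_points n" "finite S" and r: "\<And>p. p \<in> S \<Longrightarrow> r p \<in> p"
  shows "pg_indep n S \<longleftrightarrow> lin_indep_on S r"
proof
  assume "pg_indep n S"
  then show "lin_indep_on S r" using r unfolding pg_indep_def lin_indep_on_def by blast
next
  assume ind: "lin_indep_on S r"
  have "lin_indep_on S rep" if rep: "\<forall>p\<in>S. rep p \<in> p" for rep
  proof -
    have "\<exists>c. c \<noteq> 0 \<and> rep p = (\<lambda>i. c * r p i)" if p: "p \<in> S" for p
    proof -
      have "p = pg_point (r p)" using pg_points_memD(3) S(1) r p by blast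
      then show ?thesis using rep p by (metis mem_pg_point_iff)
    qed
    then obtain c where "\<And>p. p \<in> S \<Longrightarrow> c p \<noteq> 0 \<and> rep p = (\<lambda>i. c p * r p i)" by metis
    then show ?thesis by (rule lin_indep_on_rescale[OF ind])
  qed
  then show "pg_indep n S" using S by (auto simp: pg_indep_def lin_indep_on_def)
qed

section \<open>Flats of projective geometries\<close>

locale PG_flat_basis =
  fixes n k :: nat and Z :: "(nat \<Rightarrow> 'f::field) set set" and e :: "nat \<Rightarrow> (nat \<Rightarrow> 'f) set"
  assumes matroid_PG: "matroid (PG n :: (nat \<Rightarrow> 'f) set matroid)"
    and flat_Z: "flat (PG n) Z"
    and basis: "basis_of (PG n) Z (e ` {..<k})"
    and inj_e: "inj_on e {..<k}"
begin

definition b :: "nat \<Rightarrow> nat \<Rightarrow> 'f" where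
  "b i = some_elem (e i)"

definition comb :: "(nat \<Rightarrow> 'f) \<Rightarrow> nat \<Rightarrow> 'f" where
  "comb w = (\<lambda>j. \<Sum>i<k. w i * b i j)"

lemma Z_subset: "Z \<subseteq> pg_points n"
  using flat_subset_gnd[OF flat_Z] by simp

lemma basis_subset: "e ` {..<k} \<subseteq> Z"
  using basis by (simp add: basis_of_def)

lemma e_in_pg_points: "i < k \<Longrightarrow> e i \<in> pg_points n"
  using basis_subset Z_subset by auto

lemma b_in_e: "i < k \<Longrightarrow> b i \<in> e i"
  unfolding b_def by (rule some_elem_pg_point[OF e_in_pg_points])

lemma b_in_fvec: "i < k \<Longrightarrow> b i \<in> fvec n"
  using pg_points_memD(1)[OF e_in_pg_points b_in_e] .

lemma pg_indep_insert_iff: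
  assumes p: "p \<in> pg_points n - e ` {..<k}" and r: "r \<in> p"
  shows "pg_indep n (insert p (e ` {..<k})) \<longleftrightarrow> lin_indep_on {..<Suc k} (b(k := r))"
proof -
  let ?R = "(some_elem :: (nat \<Rightarrow> 'f) set \<Rightarrow> _)(p := r)"
  have "inj_on (e(k := p)) {..<Suc k}"
    using inj_e p by (auto simp: inj_on_def lessThan_Suc)
  moreover have "?R ((e(k := p)) i) = (b(k := r)) i" if "i \<in> {..<Suc k}" for i
    using that p by (auto simp: b_def)
  ultimately have "lin_indep_on ((e(k := p)) ` {..<Suc k}) ?R \<longleftrightarrow> lin_indep_on {..<Suc k} (b(k := r))"
    by (rule lin_indep_on_image)
  moreover have "(e(k := p)) ` {..<Suc k} = insert p (e ` {..<k})"
    by (auto simp: lessThan_Suc)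
  ultimately have "lin_indep_on (insert p (e ` {..<k})) ?R \<longleftrightarrow> lin_indep_on {..<Suc k} (b(k := r))"
    by simp
  moreover have "pg_indep n (insert p (e ` {..<k})) \<longleftrightarrow> lin_indep_on (insert p (e ` {..<k})) ?R"
    using p r e_in_pg_points by (intro pg_indep_iff_lin_indep_on) (auto intro: some_elem_pg_point)
  ultimately show ?thesis by simp
qed

lemma lin_indep_b: "lin_indep_on {..<k} b"
proof -
  have "pg_indep n (e ` {..<k})" using basis by (simp add: basis_of_def)
  then have "lin_indep_on (e ` {..<k}) some_elem"
    using e_in_pg_points by (subst (asm) pg_indep_iff_lin_indep_on) (auto intro: some_elem_pg_point)
  then show ?thesis using lin_indep_on_image[OF inj_e, of some_elem b] by (simp add: b_def)
qed

lemma comb_in_fvec: "comb w \<in> fvec n"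
  using b_in_fvec by (simp add: comb_def fvec_def)

lemma comb_zero: "comb (\<lambda>_. 0) = (\<lambda>_. 0)"
  by (simp add: comb_def)

lemma comb_smult: "comb (\<lambda>i. c * w i) = (\<lambda>j. c * comb w j)"
  by (simp add: comb_def sum_distrib_left mult.assoc)

lemma comb_sum: "comb (\<lambda>i. \<Sum>p\<in>S. a p * w p i) = (\<lambda>j. \<Sum>p\<in>S. a p * comb (w p) j)"
proof
  fix j
  have "comb (\<lambda>i. \<Sum>p\<in>S. a p * w p i) j = (\<Sum>i<k. \<Sum>p\<in>S. a p * (w p i * b i j))"
    by (simp add: comb_def sum_distrib_right mult.assoc)
  also have "\<dots> = (\<Sum>p\<in>S. a p * comb (w p) j)"
    by (subst sum.swap) (simp add: comb_def sum_distrib_left)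
  finally show "comb (\<lambda>i. \<Sum>p\<in>S. a p * w p i) j = (\<Sum>p\<in>S. a p * comb (w p) j)" .
qed

lemma comb_eq_zero_iff:
  assumes w: "w \<in> fvec k"
  shows "comb w = (\<lambda>_. 0) \<longleftrightarrow> w = (\<lambda>_. 0)"
proof
  assume "comb w = (\<lambda>_. 0)"
  then have "w i = 0" if "i < k" for i
    using lin_indep_onD[OF lin_indep_b, of w] that by (simp add: comb_def)
  moreover have "w i = 0" if "\<not> i < k" for i
    using w that by (simp add: fvec_def)
  ultimately show "w = (\<lambda>_. 0)" by blast
qed (simp add: comb_zero)

lemma comb_inj:
  assumes "w \<in> fvec k" "u \<in> fvec k" "comb w = comb u"
  shows "w = u"
proof -
  have "(\<lambda>i. w i - u i) \<in> fvec k" using assms(1,2) by (simp add: fvec_def)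
  moreover have "comb (\<lambda>i. w i - u i) = (\<lambda>_. 0)"
    using assms(3) by (simp add: comb_def fun_eq_iff left_diff_distrib sum_subtractf)
  ultimately have "(\<lambda>i. w i - u i) = (\<lambda>_. 0)" using comb_eq_zero_iff by blast
  then show ?thesis by (simp add: fun_eq_iff)
qed

lemma image_comb_pg_point: "comb ` pg_point w = pg_point (comb w)"
proof -
  have "pg_point (comb w) = (\<lambda>c. comb (\<lambda>i. c * w i)) ` {c. c \<noteq> 0}"
    unfolding pg_point_def comb_smult by blast
  then show ?thesis unfolding pg_point_def by blast
qed

lemma sum_lessThan_Suc_upd:
  "(\<Sum>i<Suc k. a i * (b(k := v)) i j) = (\<Sum>i<k. a i * b i j) + a k * v j"
proof -
  have "(\<Sum>i<k. a i * (b(k := v)) i j) = (\<Sum>i<k. a i * b i j)" by (rule sum.cong) auto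
  then show ?thesis by simp
qed

lemma pg_point_comb_in_Z:
  assumes w: "w \<in> fvec k" "w \<noteq> (\<lambda>_. 0)"
  shows "pg_point (comb w) \<in> Z"
proof (rule ccontr)
  let ?p = "pg_point (comb w)"
  assume "?p \<notin> Z"
  moreover have "?p \<in> pg_points n"
    using w comb_in_fvec comb_eq_zero_iff by (blast intro: pg_point_in_pg_points)
  ultimately have "pg_indep n (insert ?p (e ` {..<k}))"
    using flat_basis_insert_indep[OF matroid_PG flat_Z basis] by simp
  moreover have "?p \<in> pg_points n - e ` {..<k}"
    using \<open>?p \<in> pg_points n\<close> \<open>?p \<notin> Z\<close> basis_subset by blast
  ultimately have ind: "lin_indep_on {..<Suc k} (b(k := comb w))"
    using pg_indep_insert_iff self_in_pg_point by blast
  \<comment> \<open>yet \<open>comb w\<close> is a combination of the basis vectors, giving a dependency with coefficient \<open>-1\<close>\<close>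
  have "(\<lambda>j. \<Sum>i<Suc k. (w(k := -1)) i * (b(k := comb w)) i j) = (\<lambda>_. 0)"
    unfolding sum_lessThan_Suc_upd by (simp add: comb_def)
  then show False using lin_indep_onD[OF ind] by fastforce
qed

lemma comb_unit: "i < k \<Longrightarrow> comb (\<lambda>i'. if i' = i then 1 else 0) = b i"
proof -
  assume "i < k"
  have "(\<Sum>i'<k. (if i' = i then 1 else 0) * b i' j) = (\<Sum>i'<k. if i' = i then b i j else 0)" for j
    by (rule sum.cong) auto
  then have "(\<Sum>i'<k. (if i' = i then 1 else 0) * b i' j) = b i j" for j
    using \<open>i < k\<close> by simp
  then show ?thesis by (simp add: comb_def)
qed

lemma in_Z_imp_pg_point_comb:
  assumes q: "q \<in> Z"
  obtains w where "w \<in> fvec k" "w \<noteq> (\<lambda>_. 0)" "q = pg_point (comb w)"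
proof (cases "q \<in> e ` {..<k}")
  case True
  then obtain i where i: "i < k" "q = e i" by blast
  let ?w = "\<lambda>i'. if i' = i then 1 else 0 :: 'f"
  have "?w \<in> fvec k" "?w \<noteq> (\<lambda>_. 0)" using i by (auto simp: fvec_def fun_eq_iff)
  moreover have "q = pg_point (comb ?w)"
    using i pg_points_memD(3)[OF e_in_pg_points b_in_e] by (simp add: comb_unit)
  ultimately show ?thesis by (rule that)
next
  case False
  let ?v = "some_elem q"
  have qP: "q \<in> pg_points n" using q Z_subset by blast
  have "\<not> pg_indep n (insert q (e ` {..<k}))"
    using basis_insert_dependent[OF matroid_PG basis] q False by simp
  then have "\<not> lin_indep_on {..<Suc k} (b(k := ?v))"
    using pg_indep_insert_iff[of q ?v] qP False some_elem_pg_point by blast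
  then obtain a i where rel: "\<And>j. (\<Sum>i<k. a i * b i j) + a k * ?v j = 0"
    and i: "i < Suc k" "a i \<noteq> 0"
    unfolding lin_indep_on_def sum_lessThan_Suc_upd by (auto simp: fun_eq_iff)
  have ak: "a k \<noteq> 0"
  proof
    assume "a k = 0"
    then have "(\<lambda>j. \<Sum>i<k. a i * b i j) = (\<lambda>_. 0)" using rel by simp
    then show False using lin_indep_onD[OF lin_indep_b] i \<open>a k = 0\<close> by (metis lessThan_iff less_Suc_eq)
  qed
  let ?w = "\<lambda>i. if i < k then - a i / a k else 0"
  have "comb ?w j = ?v j" for j
  proof -
    have "comb ?w j = - (\<Sum>i<k. a i * b i j) / a k"
      unfolding comb_def by (simp add: sum_divide_distrib sum_negf)
    also have "(\<Sum>i<k. a i * b i j) = - (a k * ?v j)"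
      using rel[of j] by (simp add: eq_neg_iff_add_eq_0 add.commute)
    also have "- (- (a k * ?v j)) / a k = ?v j" using ak by simp
    finally show ?thesis .
  qed
  then have "comb ?w = ?v" by blast
  moreover have "?w \<in> fvec k" by (simp add: fvec_def)
  ultimately have "?w \<noteq> (\<lambda>_. 0)" "q = pg_point (comb ?w)"
    using pg_points_memD[OF qP some_elem_pg_point[OF qP]] comb_zero by auto
  then show ?thesis using \<open>?w \<in> fvec k\<close> that by blast
qed

lemma comb_lin_indep_on_iff:
  assumes r: "\<And>p. p \<in> S \<Longrightarrow> r p \<in> fvec k"
  shows "lin_indep_on S (\<lambda>p. comb (r p)) \<longleftrightarrow> lin_indep_on S r"
proof -
  have "(\<lambda>i. \<Sum>p\<in>S. a p * r p i) \<in> fvec k" for a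
    using r by (simp add: fvec_def)
  then have "(\<lambda>j. \<Sum>p\<in>S. a p * comb (r p) j) = (\<lambda>_. 0) \<longleftrightarrow> (\<lambda>i. \<Sum>p\<in>S. a p * r p i) = (\<lambda>_. 0)" for a
    unfolding comb_sum[symmetric] by (rule comb_eq_zero_iff)
  then show ?thesis by (simp add: lin_indep_on_def)
qed

definition embed :: "(nat \<Rightarrow> 'f) set \<Rightarrow> (nat \<Rightarrow> 'f) set" where
  "embed P = comb ` P"

lemma embed_eq: "P \<in> pg_points k \<Longrightarrow> embed P = pg_point (comb (some_elem P))"
  using pg_points_memD(3)[OF _ some_elem_pg_point] image_comb_pg_point by (metis embed_def)

lemma embed_in_Z: "P \<in> pg_points k \<Longrightarrow> embed P \<in> Z"
  using embed_eq pg_point_comb_in_Z pg_points_memD(1,2)[OF _ some_elem_pg_point] by metis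

lemma inj_on_embed: "inj_on embed (pg_points k)"
proof (rule inj_onI)
  fix P Q assume P: "P \<in> pg_points k" and Q: "Q \<in> pg_points k" and eq: "embed P = embed Q"
  have "comb (some_elem P) \<in> comb ` Q"
    using eq some_elem_pg_point[OF P] unfolding embed_def by blast
  then obtain u where u: "u \<in> Q" "comb (some_elem P) = comb u" by blast
  then have "some_elem P = u"
    using comb_inj pg_points_memD(1)[OF P some_elem_pg_point[OF P]] pg_points_memD(1)[OF Q] by blast
  then show "P = Q" using pg_points_memD(3)[OF P some_elem_pg_point[OF P]] pg_points_memD(3)[OF Q u(1)] by simp
qed

lemma embed_image: "embed ` pg_points k = Z"
proof
  show "embed ` pg_points k \<subseteq> Z" using embed_in_Z by blast
  show "Z \<subseteq> embed ` pg_points k"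
  proof
    fix q assume "q \<in> Z"
    then obtain w where w: "w \<in> fvec k" "w \<noteq> (\<lambda>_. 0)" "q = pg_point (comb w)"
      by (rule in_Z_imp_pg_point_comb)
    then have "q = embed (pg_point w)" by (simp add: embed_def image_comb_pg_point)
    then show "q \<in> embed ` pg_points k" using w pg_point_in_pg_points by blast
  qed
qed

lemma pg_indep_embed_iff:
  assumes S: "S \<subseteq> pg_points k"
  shows "pg_indep n (embed ` S) \<longleftrightarrow> pg_indep k S"
proof (cases "finite S")
  case False
  then show ?thesis
    using finite_image_iff[OF inj_on_subset[OF inj_on_embed S]] by (simp add: pg_indep_def)
next
  case True
  have inj: "inj_on embed S" using inj_on_subset[OF inj_on_embed S] .
  let ?R = "\<lambda>q. comb (some_elem (inv_into S embed q))"
  have rep_S: "some_elem p \<in> p" "some_elem p \<in> fvec k" if "p \<in> S" for p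
    using S that some_elem_pg_point pg_points_memD(1) by blast+
  have R_embed: "?R (embed p) = comb (some_elem p)" if "p \<in> S" for p
    using inj that by simp
  have "?R q \<in> q" if "q \<in> embed ` S" for q
    using that R_embed rep_S(1) by (auto simp: embed_def)
  moreover have "embed ` S \<subseteq> pg_points n" using S embed_in_Z Z_subset by blast
  ultimately have "pg_indep n (embed ` S) \<longleftrightarrow> lin_indep_on (embed ` S) ?R"
    using True by (intro pg_indep_iff_lin_indep_on) auto
  also have "\<dots> \<longleftrightarrow> lin_indep_on S (\<lambda>p. comb (some_elem p))"
    using inj R_embed by (rule lin_indep_on_image)
  also have "\<dots> \<longleftrightarrow> lin_indep_on S some_elem"
    using rep_S(2) by (rule comb_lin_indep_on_iff)
  also have "\<dots> \<longleftrightarrow> pg_indep k S"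
    using S True rep_S(1) by (intro pg_indep_iff_lin_indep_on[symmetric]) auto
  finally show ?thesis .
qed

lemma iso_map_embed: "iso_map embed (PG k) (restr (PG n) Z)"
  unfolding iso_map_def
proof (intro conjI allI impI)
  show "bij_betw embed (gnd (PG k)) (gnd (restr (PG n) Z))"
    using inj_on_embed embed_image by (simp add: bij_betw_def)
  fix S assume "S \<subseteq> gnd (PG k :: (nat \<Rightarrow> 'f) set matroid)"
  then have S: "S \<subseteq> pg_points k" by simp
  moreover have "embed ` S \<subseteq> Z" using S embed_in_Z by blast
  ultimately show "indep (PG k) S \<longleftrightarrow> indep (restr (PG n) Z) (embed ` S)"
    using pg_indep_embed_iff by simp
qed

end

lemma iso_restr_PG_flat:
  fixes Z :: "(nat \<Rightarrow> 'f::field) set set"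
  assumes m: "matroid (PG n :: (nat \<Rightarrow> 'f) set matroid)" and Z: "flat (PG n) Z"
  obtains k where "iso (restr (PG n) Z) (PG k :: (nat \<Rightarrow> 'f) set matroid)"
proof -
  obtain B where B: "basis_of (PG n) Z B" using basis_of_exists[OF m] by blast
  then have "finite B" using matroid_indep_finite[OF m] by (auto simp: basis_of_def)
  then obtain e where e: "bij_betw e {..<card B} B"
    using ex_bij_betw_nat_finite lessThan_atLeast0 by metis
  then interpret PG_flat_basis n "card B" Z e
    using m Z B by unfold_locales (auto simp: bij_betw_def)
  show ?thesis using iso_map_embed iso_sym iso_iff_iso_map that by metis
qed

lemma is_PG_restr_flat:
  fixes F :: "'f::{finite,field} itself"
  assumes m: "matroid M" and P: "is_PG F M" and X: "flat M X"
  shows "is_PG F (restr M X)"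
proof -
  obtain n f where f: "iso_map f M (PG n :: (nat \<Rightarrow> 'f) set matroid)"
    using P by (auto simp: is_PG_def iso_iff_iso_map)
  \<comment> \<open>that \<open>PG n\<close> is a matroid is only known through its isomorphism with \<open>M\<close>\<close>
  have mP: "matroid (PG n :: (nat \<Rightarrow> 'f) set matroid)"
    using matroid_iso_map[OF m f] by (simp add: pg_indep_def)
  obtain k where k: "iso (restr (PG n) (f ` X)) (PG k :: (nat \<Rightarrow> 'f) set matroid)"
    using iso_restr_PG_flat[OF mP iso_map_flat[OF m mP f X]] .
  have "iso (restr M X) (restr (PG n :: (nat \<Rightarrow> 'f) set matroid) (f ` X))"
    using iso_map_restr[OF f flat_subset_gnd[OF X]] iso_iff_iso_map by blast
  then have "iso (restr M X) (PG k :: (nat \<Rightarrow> 'f) set matroid)" using k by (rule iso_trans)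
  then show ?thesis unfolding is_PG_def by blast
qed

section \<open>Induced restrictions of chordal matroids\<close>

lemma chordal_matroid: "chordal F M \<Longrightarrow> matroid M"
  by (induction rule: chordal.induct) (auto simp: simple_matroid_def is_gpc_def)

lemma restr_eq_subset: "restr M1 T = restr M2 T \<Longrightarrow> B \<subseteq> T \<Longrightarrow> restr M1 B = restr M2 B"
  by (metis restr_restr)

lemma is_gpc_flat_Int:
  "is_gpc M1 M2 M \<Longrightarrow> flat M X \<Longrightarrow> flat M1 (X \<inter> gnd M1) \<and> flat M2 (X \<inter> gnd M2)"
  by (simp add: is_gpc_def)

lemma is_gpc_restr:
  assumes gpc: "is_gpc M1 M2 M" and m1: "matroid M1" and m2: "matroid M2" and X: "flat M X"
  shows "is_gpc (restr M1 (X \<inter> gnd M1)) (restr M2 (X \<inter> gnd M2)) (restr M X)"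
proof -
  have m: "matroid M" and gnd_M: "gnd M = gnd M1 \<union> gnd M2"
    and flat_M: "\<And>Z. flat M Z \<longleftrightarrow> Z \<subseteq> gnd M \<and> flat M1 (Z \<inter> gnd M1) \<and> flat M2 (Z \<inter> gnd M2)"
    using gpc by (simp_all add: is_gpc_def)
  have XM: "X \<subseteq> gnd M" using flat_subset_gnd[OF X] .
  have X1: "flat M1 (X \<inter> gnd M1)" and X2: "flat M2 (X \<inter> gnd M2)"
    using is_gpc_flat_Int[OF gpc X] by auto
  have "flat (restr M X) Z \<longleftrightarrow>
      Z \<subseteq> X \<and> flat (restr M1 (X \<inter> gnd M1)) (Z \<inter> (X \<inter> gnd M1))
        \<and> flat (restr M2 (X \<inter> gnd M2)) (Z \<inter> (X \<inter> gnd M2))" for Z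
  proof -
    have "\<And>A. Z \<subseteq> X \<Longrightarrow> Z \<inter> (X \<inter> A) = Z \<inter> A" by auto
    then show ?thesis
      using flat_restr_iff[OF m X] flat_restr_iff[OF m1 X1] flat_restr_iff[OF m2 X2] flat_M XM by auto
  qed
  then show ?thesis
    using matroid_restr[OF m XM] XM gnd_M by (auto simp: is_gpc_def)
qed

lemma is_PG_restr_flat_Int:
  assumes m: "matroid M" and P: "is_PG F (restr M T)" and T: "flat M T" and Y: "flat M Y"
  shows "is_PG F (restr M (T \<inter> Y))"
proof -
  have "flat (restr M T) (T \<inter> Y)" using flat_restr_iff[OF m T] flat_Int[OF m T Y] by blast
  then have "is_PG F (restr (restr M T) (T \<inter> Y))"
    using is_PG_restr_flat[OF matroid_restr[OF m flat_subset_gnd[OF T]] P] by blast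
  then show ?thesis by (simp add: restr_restr)
qed

theorem lemma2p2:
  fixes F :: "'f::{finite,field} itself" and M :: "'a matroid" and X :: "'a set"
  assumes "chordal F M" and "flat M X"
  shows "chordal F (restr M X)"
  using assms
proof (induction arbitrary: X rule: chordal.induct)
  case (base M)
  then show ?case
    using flat_subset_gnd simple_matroid_restr is_PG_restr_flat
    by (metis chordal.base simple_matroid_def)
next
  case (gpc M1 M2 M)
  let ?X1 = "X \<inter> gnd M1" and ?X2 = "X \<inter> gnd M2" and ?T = "gnd M1 \<inter> gnd M2"
  have m1: "matroid M1" and m2: "matroid M2" using gpc.hyps(1,2) by (simp_all add: chordal_matroid)
  have X1: "flat M1 ?X1" and X2: "flat M2 ?X2" using is_gpc_flat_Int[OF gpc.hyps(6) gpc.prems] by auto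
  have T: "flat M1 ?T" using gpc.hyps(3) by (simp add: modular_flat_def)
  have gnd_Int: "gnd (restr M1 ?X1) \<inter> gnd (restr M2 ?X2) = ?T \<inter> ?X1" by auto
  have sub: "?T \<inter> ?X1 \<subseteq> ?X1" "?T \<inter> ?X1 \<subseteq> ?X2" "?T \<inter> ?X1 \<subseteq> ?T" by auto
  have "modular_flat (restr M1 ?X1) (?T \<inter> ?X1)"
    using modular_flat_restr[OF m1 gpc.hyps(3) X1] .
  moreover have "restr (restr M1 ?X1) (?T \<inter> ?X1) = restr (restr M2 ?X2) (?T \<inter> ?X1)"
    using restr_eq_subset[OF gpc.hyps(4) sub(3)] by (simp only: restr_restr[OF sub(1)] restr_restr[OF sub(2)])
  moreover have "is_PG F (restr (restr M1 ?X1) (?T \<inter> ?X1))"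
    using is_PG_restr_flat_Int[OF m1 gpc.hyps(5) T X1] by (simp only: restr_restr[OF sub(1)])
  moreover have "is_gpc (restr M1 ?X1) (restr M2 ?X2) (restr M X)"
    using is_gpc_restr[OF gpc.hyps(6) m1 m2 gpc.prems] .
  ultimately show ?case
    using chordal.gpc[OF gpc.IH(1)[OF X1] gpc.IH(2)[OF X2]] unfolding gnd_Int by blast
qed

end
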